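(* For every $i\in I^+$ and every $a=(a_j)_{j\in I}\in\mathbb{N}_0^{I}$, $$\Omega_i\, x^{a}=\Big(\prod_{l=-n}^{-i}q^{2a_l}\Big)\sum_{j=i}^{n}q^{\,j-i+(a_{1-j}+\cdots+a_{j-1})}\,x^{a+\varepsilon_{-j}+\varepsilon_j}$$ in $\mathcal X$, where $a_{1-j}+\cdots+a_{j-1}$ denotes the sum of $a_k$ over all $k\in I$ with $1-j\le k\le j-1$.
   Context: Let $\mathbf{k}$ be a field of characteristic $0$, $q\in\mathbf{k}$ invertible and not a root of unity, $n\ge 2$, $I=\{-n,\dots,-1,1,\dots,n\}$ (ordered as integers; $0\notin I$), $I^+=\{1,\dots,n\}$, $\lambda=q-q^{-1}$. The quantum symplectic space $\mathcal X$ is the $\mathbf{k}$-algebra generated by $x_i$ ($i\in I$) with defining relations $x_jx_i=qx_ix_j$ for $i<j$, $j\neq -i$, and $x_ix_{-i}=q^2x_{-i}x_i+q^2\lambda\Omega_{i+1}$ for $i\in I^+$, where $\Omega_i=\sum_{j=i}^{n}q^{j-i}x_{-j}x_j$ for $i\in I^+$ and $\Omega_{n+1}=0$. For $a=(a_i)_{i\in I}\in\mathbb{N}_0^{I}$ put $x^a=x_{-n}^{a_{-n}}x_{1-n}^{a_{1-n}}\cdots x_{-1}^{a_{-1}}x_1^{a_1}\cdots x_n^{a_n}$ (a normal monomial: factors in increasing order of index); the normal monomials form a $\mathbf{k}$-basis of $\mathcal X$. $\varepsilon_i$ ($i\in I$) denotes the standard unit vector in $\mathbb{Z}^{I}$.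 *)

theory Defs
  imports Main
begin

definition idx_list :: "nat \<Rightarrow> int list" where
  "idx_list n = [- int n .. -1] @ [1 .. int n]"

definition idx_set :: "nat \<Rightarrow> int set" where
  "idx_set n = {- int n .. -1} \<union> {1 .. int n}"

definition Omega :: "('k::field \<Rightarrow> 'b::ring_1) \<Rightarrow> 'k \<Rightarrow> (int \<Rightarrow> 'b) \<Rightarrow> nat \<Rightarrow> int \<Rightarrow> 'b" where
  "Omega emb q x n i = (\<Sum>j\<in>{i .. int n}. emb (q ^ nat (j - i)) * x (- j) * x j)"

definition normal_monomial :: "(int \<Rightarrow> 'b::ring_1) \<Rightarrow> nat \<Rightarrow> (int \<Rightarrow> nat) \<Rightarrow> 'b" where
  "normal_monomial x n a = prod_list (map (\<lambda>k. x k ^ a k) (idx_list n))"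

definition add_pair :: "(int \<Rightarrow> nat) \<Rightarrow> int \<Rightarrow> (int \<Rightarrow> nat)" where
  "add_pair a j = (\<lambda>k. a k + (if k = - j then 1 else 0) + (if k = j then 1 else 0))"

text \<open>The defining relations of the quantum symplectic space, for elements x_i of a
  ring B which is a k-algebra via the central ring homomorphism emb.\<close>
definition qsymp_rel :: "('k::field \<Rightarrow> 'b::ring_1) \<Rightarrow> 'k \<Rightarrow> nat \<Rightarrow> (int \<Rightarrow> 'b) \<Rightarrow> bool" where
  "qsymp_rel emb q n x \<longleftrightarrow>
     (\<forall>i\<in>idx_set n. \<forall>j\<in>idx_set n. i < j \<and> j \<noteq> - i \<longrightarrow> x j * x i = emb q * x i * x j) \<and>
     (\<forall>i\<in>{1 .. int n}. x i * x (- i) =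
         emb (q ^ 2) * x (- i) * x i + emb (q ^ 2 * (q - inverse q)) * Omega emb q x n (i + 1))"

definition central_hom :: "('k::field \<Rightarrow> 'b::ring_1) \<Rightarrow> bool" where
  "central_hom emb \<longleftrightarrow> emb 1 = 1 \<and> (\<forall>c d. emb (c + d) = emb c + emb d) \<and>
     (\<forall>c d. emb (c * d) = emb c * emb d) \<and> (\<forall>c y. emb c * y = y * emb c)"

end

theory Submission
  imports Defs
begin

(* Omega_i commutes with every x_l for 0 < |l| < i, and Omega_i x_{-k} = q^2 x_{-k} Omega_i for
   i <= k <= n: for k = i this is the relation for x_k x_{-k} together with
   Omega_k = x_{-k} x_k + q Omega_{k+1}, and this recursion carries it down to smaller i.
   Hence Omega_i passes through the factors of x^a with index below i, collecting the powers
   q^(2 a_l).  In each summand x_{-j} x_j of Omega_i, x_{-j} then moves left and x_j moves right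
   across the factors with index strictly between -j and j, each x_k^(a_k) contributing q^(a_k). *)

definition central :: "'a::semigroup_mult \<Rightarrow> bool" where
  "central c \<longleftrightarrow> (\<forall>w. c * w = w * c)"

lemma central_one: "central (1::'a::monoid_mult)"
  by (simp add: central_def)

lemma central_mult: "central c \<Longrightarrow> central d \<Longrightarrow> central (c * d)"
  unfolding central_def by (metis mult.assoc)

lemma central_prod_list: "(\<And>k. k \<in> set L \<Longrightarrow> central (s k)) \<Longrightarrow> central (prod_list (map s L))"
  by (induction L) (auto intro: central_one central_mult)

lemma prod_list_commute_left:
  fixes y :: "'a::monoid_mult"
  assumes "\<And>k. k \<in> set L \<Longrightarrow> y * g k = s k * g k * y"
    and "\<And>k. k \<in> set L \<Longrightarrow> central (s k)"
  shows "y * prod_list (map g L) = prod_list (map s L) * prod_list (map g L) * y"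
  using assms
proof (induction L)
  case Nil
  then show ?case by simp
next
  case (Cons k L)
  let ?S = "prod_list (map s L)" and ?G = "prod_list (map g L)"
  have IH: "y * ?G = ?S * ?G * y" and hk: "y * g k = s k * g k * y"
    using Cons by simp_all
  have "central ?S"
    using Cons.prems(2) by (simp add: central_prod_list)
  have "y * (g k * ?G) = s k * (g k * ?S) * ?G * y"
    by (simp add: IH hk mult.assoc flip: mult.assoc[of y])
  also have "g k * ?S = ?S * g k"
    using \<open>central ?S\<close> by (simp add: central_def)
  finally show ?case by (simp add: mult.assoc)
qed

lemma prod_list_commute_right:
  fixes y :: "'a::monoid_mult"
  assumes "\<And>k. k \<in> set L \<Longrightarrow> g k * y = s k * y * g k"
    and "\<And>k. k \<in> set L \<Longrightarrow> central (s k)"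
  shows "prod_list (map g L) * y = prod_list (map s L) * y * prod_list (map g L)"
  using assms
proof (induction L)
  case Nil
  then show ?case by simp
next
  case (Cons k L)
  let ?S = "prod_list (map s L)" and ?G = "prod_list (map g L)"
  have IH: "?G * y = ?S * y * ?G" and hk: "g k * y = s k * y * g k"
    using Cons by simp_all
  have "central ?S" "central (s k)"
    using Cons.prems(2) by (simp_all add: central_prod_list)
  have "g k * ?G * y = (g k * ?S) * y * ?G"
    by (simp add: IH mult.assoc)
  also have "g k * ?S = ?S * g k"
    using \<open>central ?S\<close> by (simp add: central_def)
  also have "?S * g k * y * ?G = ?S * s k * y * (g k * ?G)"
    by (simp add: hk mult.assoc flip: mult.assoc[of "g k"])
  also have "?S * s k = s k * ?S"
    using \<open>central (s k)\<close> by (simp add: central_def)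
  finally show ?case by simp
qed

lemma central_power: "central (c::'a::monoid_mult) \<Longrightarrow> central (c ^ m)"
  by (induction m) (simp_all add: central_one central_mult)

lemma power_commute_left:
  fixes y :: "'a::monoid_mult"
  assumes "y * z = c * z * y" and "central c"
  shows "y * z ^ m = c ^ m * z ^ m * y"
  using prod_list_commute_left[of "replicate m z" y id "\<lambda>_. c"] assms by simp

lemma power_commute_right:
  fixes y :: "'a::monoid_mult"
  assumes "z * y = c * y * z" and "central c"
  shows "z ^ m * y = c ^ m * y * z ^ m"
  using prod_list_commute_right[of "replicate m z" id y "\<lambda>_. c"] assms by simp

lemma prod_list_map_power: "prod_list (map (\<lambda>k. (c::'a::monoid_mult) ^ f k) L) = c ^ sum_list (map f L)"
  by (induction L) (simp_all add: power_add)

definition list_monomial :: "(int \<Rightarrow> 'a::monoid_mult) \<Rightarrow> (int \<Rightarrow> nat) \<Rightarrow> int list \<Rightarrow> 'a" where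
  "list_monomial x a L = prod_list (map (\<lambda>k. x k ^ a k) L)"

lemma list_monomial_Cons [simp]: "list_monomial x a (k # L) = x k ^ a k * list_monomial x a L"
  by (simp add: list_monomial_def)

lemma list_monomial_append [simp]:
  "list_monomial x a (L @ M) = list_monomial x a L * list_monomial x a M"
  by (simp add: list_monomial_def)

lemma list_monomial_cong:
  "(\<And>k. k \<in> set L \<Longrightarrow> a k = b k) \<Longrightarrow> list_monomial x a L = list_monomial x b L"
  unfolding list_monomial_def by (metis (mono_tags, lifting) map_eq_conv)

lemma list_monomial_commute_left:
  assumes "\<And>k. k \<in> set L \<Longrightarrow> a k \<noteq> 0 \<Longrightarrow> y * x k = c * x k * y" and "central c"
  shows "y * list_monomial x a L = c ^ sum_list (map a L) * list_monomial x a L * y"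
proof -
  have "y * x k ^ a k = c ^ a k * x k ^ a k * y" if "k \<in> set L" for k
    using assms that power_commute_left[of y "x k" c "a k"] by (cases "a k = 0") simp_all
  then show ?thesis
    unfolding list_monomial_def prod_list_map_power[symmetric]
    using \<open>central c\<close> by (intro prod_list_commute_left) (simp_all add: central_power)
qed

lemma list_monomial_commute_right:
  assumes "\<And>k. k \<in> set L \<Longrightarrow> a k \<noteq> 0 \<Longrightarrow> x k * y = c * y * x k" and "central c"
  shows "list_monomial x a L * y = c ^ sum_list (map a L) * y * list_monomial x a L"
proof -
  have "x k ^ a k * y = c ^ a k * y * x k ^ a k" if "k \<in> set L" for k
    using assms that power_commute_right[of "x k" y c "a k"] by (cases "a k = 0") simp_all
  then show ?thesis
    unfolding list_monomial_def prod_list_map_power[symmetric]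
    using \<open>central c\<close> by (intro prod_list_commute_right) (simp_all add: central_power)
qed

lemma sum_list_upto_zero_exponent:
  "sum_list (map (a(0 := 0)) [l..u]) = (\<Sum>k\<in>{l..u} - {0}. a k)"
proof -
  have "sum_list (map (a(0 := 0)) [l..u]) = sum (a(0 := 0)) {l..u}"
    by (simp only: interv_sum_list_conv_sum_set_int set_upto)
  also have "\<dots> = sum (a(0 := 0)) ({l..u} - {0})"
    by (rule sum.mono_neutral_right) auto
  also have "\<dots> = (\<Sum>k\<in>{l..u} - {0}. a k)"
    by (rule sum.cong) auto
  finally show ?thesis .
qed

lemma add_pair_zero_exponent: "j \<noteq> 0 \<Longrightarrow> (add_pair a j)(0 := 0) = add_pair (a(0 := 0)) j"
  by (auto simp: add_pair_def)

(* x 0 is not a generator; giving it exponent 0 lets a normal monomial run over the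
   whole interval [-n..n]. *)
lemma normal_monomial_eq_list_monomial:
  "normal_monomial x n a = list_monomial x (a(0 := 0)) [- int n..int n]"
proof -
  have "[- int n..int n] = [- int n..-1] @ 0 # [1..int n]"
    using upto_split3[of "- int n" 0 "int n"] by simp
  moreover have "list_monomial x (a(0 := 0)) [- int n..-1] = list_monomial x a [- int n..-1]"
    "list_monomial x (a(0 := 0)) [1..int n] = list_monomial x a [1..int n]"
    by (auto intro: list_monomial_cong)
  ultimately show ?thesis
    by (simp add: normal_monomial_def idx_list_def list_monomial_def)
qed

locale central_algebra_hom =
  fixes emb :: "'k::field \<Rightarrow> 'b::ring_1"
  assumes central_hom: "central_hom emb"
begin

lemma emb_one [simp]: "emb 1 = 1"
  using central_hom unfolding central_hom_def by blast

lemma emb_add: "emb (c + d) = emb c + emb d"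
  using central_hom unfolding central_hom_def by blast

lemma emb_mult: "emb (c * d) = emb c * emb d"
  using central_hom unfolding central_hom_def by blast

lemma central_emb: "central (emb c)"
  using central_hom unfolding central_hom_def central_def by blast

lemma emb_left_commute: "y * (emb c * z) = emb c * (y * z)"
  using central_emb[of c] unfolding central_def by (metis mult.assoc)

lemma emb_power: "emb (c ^ m) = emb c ^ m"
  by (induction m) (simp_all add: emb_mult)

end

locale quantum_symplectic_space = central_algebra_hom emb
  for emb :: "'k::field \<Rightarrow> 'b::ring_1" +
  fixes q :: 'k and n :: nat and x :: "int \<Rightarrow> 'b"
  assumes relations: "qsymp_rel emb q n x"
    and q_nonzero: "q \<noteq> 0"
begin

abbreviation \<Omega> :: "int \<Rightarrow> 'b" where
  "\<Omega> i \<equiv> Omega emb q x n i"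

lemma generators_commute:
  assumes "- int n \<le> i" "i < j" "j \<le> int n" "i \<noteq> 0" "j \<noteq> 0" "j \<noteq> - i"
  shows "x j * x i = emb q * x i * x j"
  using relations assms unfolding qsymp_rel_def idx_set_def by force

lemma generators_pair_relation:
  assumes "1 \<le> k" "k \<le> int n"
  shows "x k * x (- k) = emb (q ^ 2) * x (- k) * x k + emb (q ^ 2 * (q - inverse q)) * \<Omega> (k + 1)"
  using relations assms unfolding qsymp_rel_def by simp

lemma pair_commute:
  assumes "j \<le> int n" "- j < l" "l < j" "l \<noteq> 0"
  shows "x (- j) * x j * x l = x l * (x (- j) * x j)"
proof -
  have "x (- j) * x j * x l = x (- j) * (emb q * x l * x j)"
    using generators_commute[of l j] assms by (simp add: mult.assoc)
  also have "\<dots> = (emb q * x (- j) * x l) * x j"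
    by (simp only: mult.assoc emb_left_commute)
  also have "\<dots> = x l * (x (- j) * x j)"
    using generators_commute[of "- j" l] assms by (simp flip: mult.assoc)
  finally show ?thesis .
qed

lemma pair_commute_neg:
  assumes "1 \<le> j" "j < k" "k \<le> int n"
  shows "x (- j) * x j * x (- k) = emb (q ^ 2) * x (- k) * (x (- j) * x j)"
proof -
  have "x (- j) * x j * x (- k) = x (- j) * (emb q * x (- k) * x j)"
    using generators_commute[of "- k" j] assms by (simp add: mult.assoc)
  also have "\<dots> = emb q * (x (- j) * x (- k)) * x j"
    by (simp only: mult.assoc emb_left_commute)
  also have "\<dots> = emb q * emb q * x (- k) * (x (- j) * x j)"
    using generators_commute[of "- k" "- j"] assms by (simp flip: mult.assoc)
  finally show ?thesis by (simp add: emb_mult power2_eq_square)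
qed

lemma Omega_commute:
  assumes "- i < l" "l < i" "l \<noteq> 0"
  shows "\<Omega> i * x l = x l * \<Omega> i"
  unfolding Omega_def sum_distrib_right sum_distrib_left
proof (rule sum.cong [OF refl])
  fix j assume "j \<in> {i..int n}"
  then have "x (- j) * x j * x l = x l * (x (- j) * x j)"
    using assms by (intro pair_commute) auto
  then show "emb (q ^ nat (j - i)) * x (- j) * x j * x l = x l * (emb (q ^ nat (j - i)) * x (- j) * x j)"
    by (simp add: mult.assoc emb_left_commute)
qed

lemma Omega_unfold:
  assumes "k \<le> int n"
  shows "\<Omega> k = x (- k) * x k + emb q * \<Omega> (k + 1)"
proof -
  have "{k..int n} = insert k {k + 1..int n}"
    using assms by auto
  moreover have "emb (q ^ nat (j - k)) = emb q * emb (q ^ nat (j - (k + 1)))" if "k + 1 \<le> j" for j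
  proof -
    have "nat (j - k) = Suc (nat (j - (k + 1)))"
      using that by simp
    then show ?thesis by (simp add: emb_mult)
  qed
  ultimately show ?thesis
    unfolding Omega_def by (simp add: sum_distrib_left mult.assoc)
qed

lemma Omega_commute_neg_diag:
  assumes "1 \<le> k" "k \<le> int n"
  shows "\<Omega> k * x (- k) = emb (q ^ 2) * x (- k) * \<Omega> k"
proof -
  let ?c = "q ^ 2 * (q - inverse q)"
  have commute: "\<Omega> (k + 1) * x (- k) = x (- k) * \<Omega> (k + 1)"
    using assms by (intro Omega_commute) auto
  have coeff: "?c + q = q ^ 2 * q"
    using q_nonzero by (simp add: field_simps power2_eq_square)
  have "\<Omega> k * x (- k) = x (- k) * (x k * x (- k)) + emb q * (\<Omega> (k + 1) * x (- k))"
    using assms by (simp add: Omega_unfold distrib_right mult.assoc)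
  also have "\<dots> = x (- k) * (emb (q ^ 2) * x (- k) * x k + emb ?c * \<Omega> (k + 1))
      + emb q * (x (- k) * \<Omega> (k + 1))"
    using assms by (simp only: generators_pair_relation commute)
  also have "\<dots> = emb (q ^ 2) * (x (- k) * (x (- k) * x k))
      + emb (?c + q) * (x (- k) * \<Omega> (k + 1))"
    by (simp only: distrib_left distrib_right emb_add mult.assoc emb_left_commute[of "x (- k)"]
        add.assoc)
  also have "\<dots> = emb (q ^ 2) * x (- k) * \<Omega> k"
    using assms by (simp only: coeff Omega_unfold emb_mult distrib_left mult.assoc
        emb_left_commute[of "x (- k)"])
  finally show ?thesis .
qed

lemma Omega_commute_neg:
  assumes "1 \<le> i" "i \<le> k" "k \<le> int n"
  shows "\<Omega> i * x (- k) = emb (q ^ 2) * x (- k) * \<Omega> i"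
  using assms(2,1)
proof (induction i rule: int_le_induct)
  case base
  then show ?case using assms by (intro Omega_commute_neg_diag)
next
  case (step i)
  have "\<Omega> (i - 1) * x (- k) = x (- (i - 1)) * x (i - 1) * x (- k) + emb q * (\<Omega> i * x (- k))"
    using step assms by (simp add: Omega_unfold[of "i - 1"] distrib_right mult.assoc)
  also have "\<dots> = emb (q ^ 2) * x (- k) * (x (- (i - 1)) * x (i - 1))
      + emb q * (emb (q ^ 2) * x (- k) * \<Omega> i)"
    using step assms pair_commute_neg[of "i - 1" k] by simp
  also have "\<dots> = emb (q ^ 2) * x (- k) * \<Omega> (i - 1)"
    using step assms by (simp only: Omega_unfold[of "i - 1"] diff_add_cancel distrib_left mult.assoc
        emb_left_commute[of "emb q"] emb_left_commute[of "x (- k)"])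
  finally show ?case .
qed

lemma Omega_commute_lower_monomial:
  assumes "1 \<le> i" "i \<le> int n" "b 0 = 0"
  shows "\<Omega> i * list_monomial x b [- int n..i - 1]
    = emb (\<Prod>l\<in>{- int n..- i}. q ^ (2 * b l)) * list_monomial x b [- int n..i - 1] * \<Omega> i"
proof -
  let ?N = "[- int n..- i]" and ?M = "[1 - i..i - 1]"
  have split: "[- int n..i - 1] = ?N @ ?M"
    using upto_split2[of "- int n" "- i" "i - 1"] assms by simp
  have "\<Omega> i * list_monomial x b ?N = emb (q ^ 2) ^ sum_list (map b ?N) * list_monomial x b ?N * \<Omega> i"
    using assms Omega_commute_neg[of i "- k" for k]
    by (intro list_monomial_commute_left central_emb) auto
  also have "emb (q ^ 2) ^ sum_list (map b ?N) = emb (\<Prod>l\<in>{- int n..- i}. q ^ (2 * b l))"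
    using prod.distinct_set_conv_list[of ?N "\<lambda>l. (q ^ 2) ^ b l"]
    by (simp add: emb_power prod_list_map_power power_mult)
  finally have lower: "\<Omega> i * list_monomial x b ?N = \<dots> * list_monomial x b ?N * \<Omega> i" .
  have "\<Omega> i * list_monomial x b ?M = 1 ^ sum_list (map b ?M) * list_monomial x b ?M * \<Omega> i"
    using assms by (intro list_monomial_commute_left central_one) (auto intro: Omega_commute)
  then have middle: "\<Omega> i * list_monomial x b ?M = list_monomial x b ?M * \<Omega> i"
    by simp
  have "\<Omega> i * (list_monomial x b ?N * list_monomial x b ?M)
      = emb (\<Prod>l\<in>{- int n..- i}. q ^ (2 * b l)) * list_monomial x b ?N * (\<Omega> i * list_monomial x b ?M)"
    by (simp only: lower flip: mult.assoc)
  then show ?thesis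
    unfolding split list_monomial_append middle by (simp only: mult.assoc)
qed

lemma monomial_commute_neg:
  assumes "j \<le> int n" "b 0 = 0" "\<And>k. k \<in> set L \<Longrightarrow> - j < k \<and> k < j"
  shows "list_monomial x b L * x (- j) = emb (q ^ sum_list (map b L)) * x (- j) * list_monomial x b L"
proof -
  have "x k * x (- j) = emb q * x (- j) * x k" if "k \<in> set L" "b k \<noteq> 0" for k
    using assms(1,2) assms(3)[OF that(1)] that(2) by (intro generators_commute) auto
  then show ?thesis
    unfolding emb_power by (intro list_monomial_commute_right central_emb)
qed

lemma monomial_commute_pos:
  assumes "j \<le> int n" "b 0 = 0" "\<And>k. k \<in> set L \<Longrightarrow> - j < k \<and> k < j"
  shows "x j * list_monomial x b L = emb (q ^ sum_list (map b L)) * list_monomial x b L * x j"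
proof -
  have "x j * x k = emb q * x k * x j" if "k \<in> set L" "b k \<noteq> 0" for k
    using assms(1,2) assms(3)[OF that(1)] that(2) by (intro generators_commute) auto
  then show ?thesis
    unfolding emb_power by (intro list_monomial_commute_left central_emb)
qed

lemma monomial_insert_pair:
  assumes "1 \<le> i" "i \<le> j" "j \<le> int n" "b 0 = 0"
  shows "list_monomial x b [- int n..i - 1] * (x (- j) * x j) * list_monomial x b [i..int n]
    = emb (q ^ sum_list (map b [1 - j..j - 1])) * list_monomial x (add_pair b j) [- int n..int n]"
proof -
  let ?A = "[- int n..- j - 1]" and ?D = "[1 - j..i - 1]" and ?E = "[i..j - 1]" and ?C = "[j + 1..int n]"
  let ?b' = "add_pair b j" and ?d = "sum_list (map b ?D)" and ?e = "sum_list (map b ?E)"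
  have lower: "[- int n..i - 1] = ?A @ - j # ?D"
    using upto_split3[of "- int n" "- j" "i - 1"] assms by simp
  have upper: "[i..int n] = ?E @ j # ?C"
    using upto_split3[of i j "int n"] assms by simp
  have inner: "[1 - j..j - 1] = ?D @ ?E"
    using upto_split1[of "1 - j" i "j - 1"] assms by (cases "i = j") simp_all
  have whole: "[- int n..int n] = ?A @ - j # (?D @ ?E) @ j # ?C"
    using upto_split3[of "- int n" "- j" "int n"] upto_split3[of "1 - j" j "int n"] inner assms
    by simp
  have unchanged: "list_monomial x ?b' ?A = list_monomial x b ?A"
    "list_monomial x ?b' ?D = list_monomial x b ?D" "list_monomial x ?b' ?E = list_monomial x b ?E"
    "list_monomial x ?b' ?C = list_monomial x b ?C"
    using assms by (auto intro!: list_monomial_cong simp: add_pair_def)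
  have raised: "?b' (- j) = Suc (b (- j))" "?b' j = Suc (b j)"
    using assms by (simp_all add: add_pair_def)
  have move_neg: "list_monomial x b ?D * x (- j) = emb (q ^ ?d) * x (- j) * list_monomial x b ?D"
    using assms by (intro monomial_commute_neg) auto
  have move_pos: "x j * list_monomial x b ?E = emb (q ^ ?e) * list_monomial x b ?E * x j"
    using assms by (intro monomial_commute_pos) auto
  have "list_monomial x b [- int n..i - 1] * (x (- j) * x j) * list_monomial x b [i..int n]
      = list_monomial x b ?A * x (- j) ^ b (- j) * (list_monomial x b ?D * x (- j))
        * (x j * list_monomial x b ?E) * (x j ^ b j * list_monomial x b ?C)"
    unfolding lower upper by (simp add: mult.assoc)
  also have "\<dots> = list_monomial x b ?A * x (- j) ^ b (- j) * (emb (q ^ ?d) * x (- j) * list_monomial x b ?D)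
        * (emb (q ^ ?e) * list_monomial x b ?E * x j) * (x j ^ b j * list_monomial x b ?C)"
    by (simp only: move_neg move_pos)
  also have "\<dots> = emb (q ^ ?d) * (emb (q ^ ?e) * (list_monomial x b ?A * (x (- j) ^ b (- j) * x (- j))
        * list_monomial x b ?D * list_monomial x b ?E * (x j * x j ^ b j) * list_monomial x b ?C))"
    by (simp only: mult.assoc emb_left_commute[of "list_monomial x b ?A"]
        emb_left_commute[of "x (- j) ^ b (- j)"] emb_left_commute[of "x (- j)"]
        emb_left_commute[of "list_monomial x b ?D"])
  also have "\<dots> = emb (q ^ sum_list (map b [1 - j..j - 1])) * list_monomial x ?b' [- int n..int n]"
    unfolding whole inner list_monomial_append list_monomial_Cons unchanged raised
    by (simp only: power_Suc2[of "x (- j)"] power_Suc[of "x j"] map_append sum_list_append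
        power_add emb_mult mult.assoc)
  finally show ?thesis .
qed

lemma Omega_mult_normal_monomial:
  assumes "1 \<le> i" "i \<le> int n"
  shows "\<Omega> i * normal_monomial x n a =
    emb (\<Prod>l\<in>{- int n .. - i}. q ^ (2 * a l)) *
    (\<Sum>j\<in>{i .. int n}. emb (q ^ (nat (j - i) + (\<Sum>k\<in>{1 - j .. j - 1} - {0}. a k)))
      * normal_monomial x n (add_pair a j))"
proof -
  define b where "b = a(0 := 0)"
  let ?P = "list_monomial x b [- int n..i - 1]" and ?Q = "list_monomial x b [i..int n]"
  have split: "normal_monomial x n a = ?P * ?Q"
    unfolding normal_monomial_eq_list_monomial b_def[symmetric]
    using upto_split1[of "- int n" i "int n"] assms by simp
  have coeff: "(\<Prod>l\<in>{- int n..- i}. q ^ (2 * b l)) = (\<Prod>l\<in>{- int n..- i}. q ^ (2 * a l))"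
    using assms by (intro prod.cong) (auto simp: b_def)
  have summand: "?P * (emb (q ^ nat (j - i)) * x (- j) * x j * ?Q)
      = emb (q ^ (nat (j - i) + (\<Sum>k\<in>{1 - j..j - 1} - {0}. a k))) * normal_monomial x n (add_pair a j)"
    if "j \<in> {i..int n}" for j
  proof -
    have degree: "sum_list (map b [1 - j..j - 1]) = (\<Sum>k\<in>{1 - j..j - 1} - {0}. a k)"
      unfolding b_def by (rule sum_list_upto_zero_exponent)
    have raised: "normal_monomial x n (add_pair a j) = list_monomial x (add_pair b j) [- int n..int n]"
      using that assms by (simp add: normal_monomial_eq_list_monomial add_pair_zero_exponent b_def)
    have "?P * (emb (q ^ nat (j - i)) * x (- j) * x j * ?Q) = emb (q ^ nat (j - i)) * (?P * (x (- j) * x j) * ?Q)"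
      by (simp only: mult.assoc emb_left_commute[of ?P])
    also have "\<dots> = emb (q ^ nat (j - i)) * (emb (q ^ sum_list (map b [1 - j..j - 1]))
        * list_monomial x (add_pair b j) [- int n..int n])"
      using that assms by (simp add: monomial_insert_pair b_def)
    finally show ?thesis
      unfolding degree raised by (simp only: power_add emb_mult mult.assoc)
  qed
  have "\<Omega> i * normal_monomial x n a = (\<Omega> i * ?P) * ?Q"
    by (simp add: split mult.assoc)
  also have "\<dots> = emb (\<Prod>l\<in>{- int n..- i}. q ^ (2 * a l)) * (?P * (\<Omega> i * ?Q))"
    using Omega_commute_lower_monomial[of i b] assms by (simp add: coeff b_def mult.assoc)
  also have "?P * (\<Omega> i * ?Q) = (\<Sum>j\<in>{i..int n}. ?P * (emb (q ^ nat (j - i)) * x (- j) * x j * ?Q))"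
    unfolding Omega_def sum_distrib_right sum_distrib_left ..
  also have "\<dots> = (\<Sum>j\<in>{i..int n}. emb (q ^ (nat (j - i) + (\<Sum>k\<in>{1 - j..j - 1} - {0}. a k)))
      * normal_monomial x n (add_pair a j))"
    using summand by (rule sum.cong [OF refl])
  finally show ?thesis .
qed

end

theorem lemma2p4:
  fixes emb :: "'k::field_char_0 \<Rightarrow> 'b::ring_1"
    and q :: 'k and n :: nat and x :: "int \<Rightarrow> 'b"
  assumes "n \<ge> 2"
    and "q \<noteq> 0" and "\<forall>m::nat. m > 0 \<longrightarrow> q ^ m \<noteq> 1"
    and "central_hom emb"
    and "qsymp_rel emb q n x"
  shows "\<forall>i\<in>{1 .. int n}. \<forall>a :: int \<Rightarrow> nat.
     Omega emb q x n i * normal_monomial x n a =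
       emb (\<Prod>l\<in>{- int n .. - i}. q ^ (2 * a l)) *
       (\<Sum>j\<in>{i .. int n}. emb (q ^ (nat (j - i) + (\<Sum>k\<in>{1 - j .. j - 1} - {0}. a k)))
           * normal_monomial x n (add_pair a j))"
proof -
  interpret quantum_symplectic_space emb q n x
    using assms by unfold_locales auto
  show ?thesis
    using Omega_mult_normal_monomial by auto
qed

end
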